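(* Let $n\ge2$, $\boldsymbol{\pi}\in\Delta_n^\circ$, $\sigma>0$ and $\mathbf{x},\mathbf{y}\in\Delta_n^\circ$. Then $$H_{1+\sigma}\big(\mu_{\boldsymbol{\pi},\mathbf{y},\sigma}\,\big\|\,\mu_{\boldsymbol{\pi},\mathbf{x},\sigma}\big)=\frac1\sigma\,\Gamma_{\boldsymbol{\pi}}(\mathbf{y}\,\|\,\mathbf{x}).$$
   Context: $\Delta_n^\circ=\{\mathbf{x}\in(0,1]^n:\sum_ix_i=1\}$. For $\mathbf{x}\in(0,\infty)^n$, $\mathcal{C}[\mathbf{x}]=\mathbf{x}/\sum_jx_j$, $\mathbf{x}^{-1}=(1/x_i)_i$, $\odot$ is the componentwise product. For $\boldsymbol{\pi}\in\Delta_n^\circ$ and $\mathbf{x},\mathbf{y}\in(0,\infty)^n$, $\Gamma_{\boldsymbol{\pi}}(\mathbf{y}\,\|\,\mathbf{x})=\log\big(\sum_i\pi_i\frac{y_i}{x_i}\big)-\sum_i\pi_i\log\frac{y_i}{x_i}$. The scaled Dirichlet distribution $\mathcal{SD}(\boldsymbol{\alpha},\boldsymbol{\beta})$ ($\boldsymbol{\alpha},\boldsymbol{\beta}\in(0,\infty)^n$) is the law of $\mathcal{C}[\mathbf{X}]$ with $X_1,\dots,X_n$ independent, $X_i\sim\mathrm{Gamma}(\text{shape }\alpha_i,\text{ rate }\beta_i)$; and $\mu_{\boldsymbol{\pi},\mathbf{x},\sigma}=\mathcal{SD}\big(\tfrac1\sigma\boldsymbol{\pi},\ \boldsymbol{\pi}\odot\mathbf{x}^{-1}\big)$.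 For probability measures $\mu_1\ll\mu_2$ and $\alpha>0$, $\alpha\neq1$, the Rényi divergence is $H_\alpha(\mu_1\|\mu_2)=\frac{1}{\alpha-1}\log\int\big(\frac{d\mu_1}{d\mu_2}\big)^\alpha d\mu_2$ (and $+\infty$ if $\mu_1\not\ll\mu_2$). *)

theory Defs
  imports "HOL-Analysis.Analysis" "HOL-Probability.Probability"
begin

text \<open>Open simplex: vectors indexed by a finite type 'n (n = CARD('n)).\<close>
definition open_simplex :: "('n::finite \<Rightarrow> real) set" where
  "open_simplex = {x. (\<forall>i. 0 < x i \<and> x i \<le> 1) \<and> (\<Sum>i\<in>UNIV. x i) = 1}"

definition closure_op :: "('n::finite \<Rightarrow> real) \<Rightarrow> ('n \<Rightarrow> real)" where
  "closure_op x = (\<lambda>i. x i / (\<Sum>j\<in>UNIV. x j))"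

definition gamma_density :: "real \<Rightarrow> real \<Rightarrow> real \<Rightarrow> real" where
  "gamma_density a b t =
     (if 0 < t then b powr a * t powr (a - 1) * exp (- b * t) / Gamma a else 0)"

definition gamma_distr :: "real \<Rightarrow> real \<Rightarrow> real measure" where
  "gamma_distr a b = density lborel (\<lambda>t. ennreal (gamma_density a b t))"

definition scaled_dirichlet :: "('n::finite \<Rightarrow> real) \<Rightarrow> ('n \<Rightarrow> real) \<Rightarrow> ('n \<Rightarrow> real) measure" where
  "scaled_dirichlet \<alpha> \<beta> =
     distr (PiM UNIV (\<lambda>i. gamma_distr (\<alpha> i) (\<beta> i))) (PiM UNIV (\<lambda>_. borel)) closure_op"

definition mu_sd :: "('n::finite \<Rightarrow> real) \<Rightarrow> ('n \<Rightarrow> real) \<Rightarrow> real \<Rightarrow> ('n \<Rightarrow> real) measure" where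
  "mu_sd \<pi> x \<sigma> = scaled_dirichlet (\<lambda>i. \<pi> i / \<sigma>) (\<lambda>i. \<pi> i / x i)"

definition Gamma_div :: "('n::finite \<Rightarrow> real) \<Rightarrow> ('n \<Rightarrow> real) \<Rightarrow> ('n \<Rightarrow> real) \<Rightarrow> real" where
  "Gamma_div \<pi> y x = ln (\<Sum>i\<in>UNIV. \<pi> i * (y i / x i)) - (\<Sum>i\<in>UNIV. \<pi> i * ln (y i / x i))"

text \<open>RN_deriv M2 M1 is the Radon-Nikodym derivative dM1/dM2.\<close>
definition renyi_div :: "real \<Rightarrow> 'a measure \<Rightarrow> 'a measure \<Rightarrow> ereal" where
  "renyi_div \<alpha> M1 M2 =
     (let I = (\<integral>\<^sup>+ \<omega>. ennreal ((enn2real (RN_deriv M2 M1 \<omega>)) powr \<alpha>) \<partial>M2) in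
      if \<not> absolutely_continuous M2 M1 \<or> I = \<top> then \<infinity>
      else ereal (ln (enn2real I) / (\<alpha> - 1)))"

end

theory Submission
  imports Defs
begin

text \<open>Both laws are images under the closure map of products of independent Gamma laws with common
  shapes \<open>a = \<pi> / \<sigma>\<close> and rates \<open>b\<^sub>x = \<pi> / x\<close> resp. \<open>b\<^sub>y = \<pi> / y\<close>. Substituting \<open>t = exp (- v) * u\<close>
  and using Fubini, integrals of functions homogeneous of degree \<open>-n\<close> against radial weights
  \<open>g (L t)\<close> can be traded between two positive linear forms \<open>L\<close>. For scale-invariant test functions
  this replaces the rates \<open>b\<^sub>y\<close> of the product Gamma density by \<open>b\<^sub>x\<close> at the cost of the
  scale-invariant factor \<open>(K\<^sub>y / K\<^sub>x) (\<langle>b\<^sub>x, t\<rangle> / \<langle>b\<^sub>y, t\<rangle>) powr A\<close>, where \<open>K\<^sub>b\<close> is the normalising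
  constant and \<open>A = \<Sum>a\<close>; this factor is therefore the density between the two scaled Dirichlet
  laws. Its \<open>(1 + 1/A)\<close>-th moment follows from the same exchange together with
  \<open>\<Gamma>(A + 1) = A \<Gamma>(A)\<close> and a shift of one Gamma shape, and gives
  \<open>H = \<Sum>i. a\<^sub>i ln (b\<^sub>y\<^sub>i / b\<^sub>x\<^sub>i) + A ln (\<Sum>j. a\<^sub>j b\<^sub>x\<^sub>j / b\<^sub>y\<^sub>j / A)\<close>, which is \<open>\<Gamma>\<^sub>\<pi>(y \<parallel> x) / \<sigma>\<close>
  for \<open>A = 1 / \<sigma>\<close>.\<close>

lemma nn_integral_exp_substitution:
  fixes f :: "real \<Rightarrow> real"
  assumes f[measurable]: "f \<in> borel_measurable borel"
  shows "(\<integral>\<^sup>+v. ennreal (f (exp v) * exp v) \<partial>lborel) = (\<integral>\<^sup>+s. ennreal (f s * indicator {0<..} s) \<partial>lborel)"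
proof -
  define S where "S N = {exp (- real N)..exp (real N)}" for N :: nat
  define T where "T N = {- real N..real N}" for N :: nat
  define D where "D = density lborel (\<lambda>s. ennreal (f s))"
  define D' where "D' = density lborel (\<lambda>v. ennreal (f (exp v) * exp v))"
  have S_Union: "(\<Union>N. S N) = {0<..}"
  proof (intro equalityI subsetI)
    fix s :: real assume "s \<in> {0<..}"
    moreover obtain N :: nat where "\<bar>ln s\<bar> \<le> real N" using real_arch_simple by blast
    ultimately have "exp (- real N) \<le> s" "s \<le> exp (real N)"
      by (metis abs_le_iff exp_le_cancel_iff exp_ln greaterThan_iff minus_le_iff)+
    then have "s \<in> S N"
      unfolding S_def by simp
    then show "s \<in> (\<Union>N. S N)" by blast
  qed (auto simp: S_def intro: less_le_trans[OF exp_gt_zero])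
  have T_Union: "(\<Union>N. T N) = UNIV"
    by (auto simp: T_def) (metis abs_le_iff minus_le_iff real_arch_simple)
  have "(\<integral>\<^sup>+s. ennreal (f s * indicator {0<..} s) \<partial>lborel) = emeasure D (\<Union>N. S N)"
    unfolding D_def S_Union
    by (subst emeasure_density) (auto intro!: nn_integral_cong simp: indicator_def)
  also have "\<dots> = (SUP N. emeasure D (S N))"
    by (rule SUP_emeasure_incseq[symmetric]) (auto simp: D_def S_def incseq_def)
  also have "\<dots> = (SUP N. emeasure D' (T N))"
  proof (intro SUP_cong refl)
    fix N
    have "emeasure D (S N) = (\<integral>\<^sup>+s. ennreal (f s * indicator (S N) s) \<partial>lborel)"
      unfolding D_def by (subst emeasure_density) (auto intro!: nn_integral_cong simp: S_def indicator_def)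
    also have "\<dots> = (\<integral>\<^sup>+v. ennreal (f (exp v) * exp v * indicator (T N) v) \<partial>lborel)"
      unfolding S_def T_def
      by (rule nn_integral_substitution[where g' = exp])
         (auto intro!: DERIV_exp continuous_on_exp continuous_on_id simp: set_borel_measurable_def)
    also have "\<dots> = emeasure D' (T N)"
      unfolding D'_def by (subst emeasure_density) (auto intro!: nn_integral_cong simp: T_def indicator_def)
    finally show "emeasure D (S N) = emeasure D' (T N)" .
  qed
  also have "\<dots> = emeasure D' (\<Union>N. T N)"
    by (rule SUP_emeasure_incseq) (auto simp: D'_def T_def incseq_def)
  also have "\<dots> = (\<integral>\<^sup>+v. ennreal (f (exp v) * exp v) \<partial>lborel)"
    unfolding D'_def T_Union by (simp add: emeasure_density)
  finally show ?thesis ..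
qed

lemma Gamma_plus1_pos: "0 < (z::real) \<Longrightarrow> Gamma (z + 1) = z * Gamma z"
  by (intro Gamma_plus1) (auto elim!: nonpos_Ints_cases)

lemma nn_integral_Gamma_real:
  assumes "a > 0"
  shows "(\<integral>\<^sup>+s. ennreal (s powr (a - 1) / exp s * indicator {0<..} s) \<partial>lborel) = ennreal (Gamma a)"
proof -
  have "(\<integral>\<^sup>+s. ennreal (s powr (a - 1) / exp s * indicator {0<..} s) \<partial>lborel) =
      (\<integral>\<^sup>+s. ennreal (indicator {0..} s * (s powr (a - 1) / exp s)) \<partial>lborel)"
    by (intro nn_integral_cong) (auto simp: indicator_def)
  also have "\<dots> = ennreal (Gamma a)"
    by (rule nn_integral_has_integral_lebesgue[OF _ Gamma_integral_real[OF assms]]) auto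
  finally show ?thesis .
qed

lemma nn_integral_Gamma_exp:
  assumes "a > 0"
  shows "(\<integral>\<^sup>+v. ennreal (exp v powr a * exp (- exp v)) \<partial>lborel) = ennreal (Gamma a)"
proof -
  have "exp v powr (a - 1) / exp (exp v) * exp v = exp v powr a * exp (- exp v)" for v
    by (simp add: powr_diff exp_minus field_simps)
  then show ?thesis
    using nn_integral_exp_substitution[of "\<lambda>s. s powr (a - 1) / exp s"] nn_integral_Gamma_real[OF assms]
    by simp
qed

lemma nn_integral_lborel_exp_mult:
  fixes g :: "real \<Rightarrow> ennreal"
  assumes [measurable]: "g \<in> borel_measurable borel" and "s > 0"
  shows "(\<integral>\<^sup>+v. g (exp v * s) \<partial>lborel) = (\<integral>\<^sup>+v. g (exp v) \<partial>lborel)"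
    and "(\<integral>\<^sup>+v. g (exp (- v) * s) \<partial>lborel) = (\<integral>\<^sup>+v. g (exp v) \<partial>lborel)"
proof -
  have "(\<integral>\<^sup>+v. g (exp v) \<partial>lborel) = (\<integral>\<^sup>+v. g (exp (ln s + c * v)) \<partial>lborel)" if "\<bar>c\<bar> = 1" for c
    using nn_integral_real_affine[of "\<lambda>v. g (exp v)" c "ln s"] that by auto
  from this[of 1] this[of "-1"] \<open>s > 0\<close>
  show "(\<integral>\<^sup>+v. g (exp v * s) \<partial>lborel) = (\<integral>\<^sup>+v. g (exp v) \<partial>lborel)"
    and "(\<integral>\<^sup>+v. g (exp (- v) * s) \<partial>lborel) = (\<integral>\<^sup>+v. g (exp v) \<partial>lborel)"
    by (simp_all add: exp_add exp_diff exp_minus divide_inverse mult.commute)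
qed

abbreviation lborel_Pi :: "('n::finite \<Rightarrow> real) measure" where
  "lborel_Pi \<equiv> PiM UNIV (\<lambda>_. lborel)"

lemma measurable_lborel_Pi_scale[measurable]:
  "(\<lambda>u::'n::finite \<Rightarrow> real. \<lambda>i. c * u i) \<in> measurable lborel_Pi lborel_Pi"
  by (rule measurable_PiM_single') (auto simp: space_PiM)

lemma lborel_Pi_eq_density_distr_scale:
  fixes c :: real
  assumes c: "c > 0"
  shows "(lborel_Pi :: ('n::finite \<Rightarrow> real) measure) =
    density (distr lborel_Pi lborel_Pi (\<lambda>u. \<lambda>i. c * u i)) (\<lambda>_. ennreal (c ^ CARD('n)))"
    (is "_ = ?P")
proof (rule sym, rule product_sigma_finite.PiM_eqI)
  interpret product_sigma_finite "\<lambda>_::'n. lborel :: real measure" by standard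
  show "product_sigma_finite (\<lambda>_::'n. lborel :: real measure)" ..
  fix A :: "'n \<Rightarrow> real set" assume "\<And>i. i \<in> UNIV \<Longrightarrow> A i \<in> sets lborel"
  then have A[measurable]: "A i \<in> sets borel" for i by simp
  have pre[measurable]: "(\<lambda>x. c * x) -` A i \<in> sets borel" for i
    using measurable_sets[of "\<lambda>x::real. c * x" borel borel "A i"] by simp
  have lborel_pre: "emeasure lborel ((\<lambda>x. c * x) -` A i) = ennreal (inverse c) * emeasure lborel (A i)" for i
  proof -
    have "emeasure lborel ((\<lambda>x. c * x) -` A i) = emeasure (distr lborel borel ((*) c)) (A i)"
      by (subst emeasure_distr) auto
    also have "\<dots> = ennreal (inverse c) * emeasure lborel (A i)"
      using c by (subst lborel_distr_mult) (auto simp: emeasure_density_const)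
    finally show ?thesis .
  qed
  have PE: "Pi\<^sub>E UNIV A \<in> sets lborel_Pi"
    by (auto intro!: sets_PiM_I_finite)
  have "(\<lambda>u::'n \<Rightarrow> real. \<lambda>i. c * u i) -` Pi\<^sub>E UNIV A \<inter> space lborel_Pi = Pi\<^sub>E UNIV (\<lambda>i. (\<lambda>x. c * x) -` A i)"
    by (auto simp: space_PiM PiE_def Pi_def extensional_def)
  then have "?P (Pi\<^sub>E UNIV A) = ennreal (c ^ CARD('n)) * emeasure lborel_Pi (Pi\<^sub>E UNIV (\<lambda>i. (\<lambda>x. c * x) -` A i))"
    using PE by (simp add: emeasure_density_const emeasure_distr)
  also have "\<dots> = ennreal (c ^ CARD('n)) * (ennreal (inverse c) ^ CARD('n) * (\<Prod>i\<in>UNIV. emeasure lborel (A i)))"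
    by (simp add: emeasure_PiM lborel_pre prod.distrib card_UNIV_def)
  also have "\<dots> = (\<Prod>i\<in>UNIV. emeasure lborel (A i))"
  proof -
    have "ennreal (c ^ CARD('n)) * ennreal (inverse c) ^ CARD('n) = 1"
      using c by (simp add: ennreal_power[symmetric] ennreal_mult'[symmetric] power_mult_distrib[symmetric])
    then show ?thesis by (simp add: mult.assoc[symmetric])
  qed
  finally show "?P (Pi\<^sub>E UNIV A) = (\<Prod>i\<in>UNIV. emeasure lborel (A i))" .
qed simp_all

lemma nn_integral_lborel_Pi_scale:
  fixes h :: "('n::finite \<Rightarrow> real) \<Rightarrow> ennreal"
  assumes c: "c > 0" and [measurable]: "h \<in> borel_measurable lborel_Pi"
  shows "(\<integral>\<^sup>+t. h t \<partial>lborel_Pi) = ennreal (c ^ CARD('n)) * (\<integral>\<^sup>+u. h (\<lambda>i. c * u i) \<partial>lborel_Pi)"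
  by (subst lborel_Pi_eq_density_distr_scale[OF c])
     (simp add: nn_integral_density nn_integral_distr nn_integral_cmult)

text \<open>Both sides equal \<open>\<integral>\<integral> F t * g1 (L1 t) * g2 (exp v * L2 t) dv dt\<close>: substitute
  \<open>t = exp (- v) * u\<close>, which the homogeneity of \<open>F\<close>, \<open>L1\<close>, \<open>L2\<close> absorbs, and apply Fubini.\<close>

lemma nn_integral_homogeneous_exchange:
  fixes F :: "('n::finite \<Rightarrow> real) \<Rightarrow> ennreal" and L1 L2 :: "('n \<Rightarrow> real) \<Rightarrow> real"
    and g1 g2 :: "real \<Rightarrow> ennreal"
  assumes [measurable]: "F \<in> borel_measurable lborel_Pi" "L1 \<in> borel_measurable lborel_Pi"
    "L2 \<in> borel_measurable lborel_Pi" "g1 \<in> borel_measurable borel" "g2 \<in> borel_measurable borel"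
  assumes F_hom: "\<And>c t. c > 0 \<Longrightarrow> F t = ennreal (c ^ CARD('n)) * F (\<lambda>i. c * t i)"
    and L1_hom: "\<And>c t. c > 0 \<Longrightarrow> L1 (\<lambda>i. c * t i) = c * L1 t"
    and L2_hom: "\<And>c t. c > 0 \<Longrightarrow> L2 (\<lambda>i. c * t i) = c * L2 t"
    and L_pos: "\<And>t. F t \<noteq> 0 \<Longrightarrow> L1 t > 0 \<and> L2 t > 0"
  shows "(\<integral>\<^sup>+t. F t * g1 (L1 t) \<partial>lborel_Pi) * (\<integral>\<^sup>+v. g2 (exp v) \<partial>lborel)
       = (\<integral>\<^sup>+t. F t * g2 (L2 t) \<partial>lborel_Pi) * (\<integral>\<^sup>+v. g1 (exp v) \<partial>lborel)"
proof -
  interpret product_sigma_finite "\<lambda>_::'n. lborel :: real measure" by standard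
  interpret pair_sigma_finite "lborel_Pi :: ('n \<Rightarrow> real) measure" lborel
    by (intro pair_sigma_finite.intro sigma_finite lborel.sigma_finite_measure_axioms) simp
  have "(\<integral>\<^sup>+t. F t * g1 (L1 t) \<partial>lborel_Pi) * (\<integral>\<^sup>+v. g2 (exp v) \<partial>lborel)
      = (\<integral>\<^sup>+t. F t * g1 (L1 t) * (\<integral>\<^sup>+v. g2 (exp v) \<partial>lborel) \<partial>lborel_Pi)"
    by (rule nn_integral_multc[symmetric]) measurable
  also have "\<dots> = (\<integral>\<^sup>+t. (\<integral>\<^sup>+v. F t * g1 (L1 t) * g2 (exp v * L2 t) \<partial>lborel) \<partial>lborel_Pi)"
  proof (rule nn_integral_cong)
    fix t :: "'n \<Rightarrow> real"
    show "F t * g1 (L1 t) * (\<integral>\<^sup>+v. g2 (exp v) \<partial>lborel) = (\<integral>\<^sup>+v. F t * g1 (L1 t) * g2 (exp v * L2 t) \<partial>lborel)"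
      using L_pos[of t] by (cases "F t = 0") (simp_all add: nn_integral_cmult nn_integral_lborel_exp_mult)
  qed
  also have "\<dots> = (\<integral>\<^sup>+v. (\<integral>\<^sup>+t. F t * g1 (L1 t) * g2 (exp v * L2 t) \<partial>lborel_Pi) \<partial>lborel)"
    by (rule Fubini'[symmetric]) measurable
  also have "\<dots> = (\<integral>\<^sup>+v. (\<integral>\<^sup>+u. F u * g1 (exp (- v) * L1 u) * g2 (L2 u) \<partial>lborel_Pi) \<partial>lborel)"
  proof (rule nn_integral_cong)
    fix v :: real
    have cancel: "exp v * (exp (- v) * r) = r" for r by (simp add: exp_minus)
    have "(\<integral>\<^sup>+t. F t * g1 (L1 t) * g2 (exp v * L2 t) \<partial>lborel_Pi) =
      (\<integral>\<^sup>+u. ennreal (exp (- v) ^ CARD('n)) * F (\<lambda>i. exp (- v) * u i) * g1 (exp (- v) * L1 u)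
          * g2 (L2 u) \<partial>lborel_Pi)"
      by (subst nn_integral_lborel_Pi_scale[of "exp (- v)"])
         (auto simp: L1_hom L2_hom cancel mult.assoc simp flip: nn_integral_cmult)
    also have "\<dots> = (\<integral>\<^sup>+u. F u * g1 (exp (- v) * L1 u) * g2 (L2 u) \<partial>lborel_Pi)"
      by (simp add: F_hom[symmetric])
    finally show "(\<integral>\<^sup>+t. F t * g1 (L1 t) * g2 (exp v * L2 t) \<partial>lborel_Pi) =
       (\<integral>\<^sup>+u. F u * g1 (exp (- v) * L1 u) * g2 (L2 u) \<partial>lborel_Pi)" .
  qed
  also have "\<dots> = (\<integral>\<^sup>+u. (\<integral>\<^sup>+v. F u * g1 (exp (- v) * L1 u) * g2 (L2 u) \<partial>lborel) \<partial>lborel_Pi)"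
    by (rule Fubini') measurable
  also have "\<dots> = (\<integral>\<^sup>+u. F u * g2 (L2 u) * (\<integral>\<^sup>+v. g1 (exp v) \<partial>lborel) \<partial>lborel_Pi)"
  proof (rule nn_integral_cong)
    fix u :: "'n \<Rightarrow> real"
    show "(\<integral>\<^sup>+v. F u * g1 (exp (- v) * L1 u) * g2 (L2 u) \<partial>lborel) = F u * g2 (L2 u) * (\<integral>\<^sup>+v. g1 (exp v) \<partial>lborel)"
    proof (cases "F u = 0")
      case False
      have "(\<integral>\<^sup>+v. F u * g1 (exp (- v) * L1 u) * g2 (L2 u) \<partial>lborel) =
          F u * g2 (L2 u) * (\<integral>\<^sup>+v. g1 (exp (- v) * L1 u) \<partial>lborel)"
        by (simp add: nn_integral_cmult nn_integral_multc mult_ac)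
      with False L_pos[of u] show ?thesis by (simp add: nn_integral_lborel_exp_mult)
    qed simp
  qed
  also have "\<dots> = (\<integral>\<^sup>+t. F t * g2 (L2 t) \<partial>lborel_Pi) * (\<integral>\<^sup>+v. g1 (exp v) \<partial>lborel)"
    by (rule nn_integral_multc) measurable
  finally show ?thesis .
qed

definition gamma_monomial :: "('n::finite \<Rightarrow> real) \<Rightarrow> ('n \<Rightarrow> real) \<Rightarrow> real" where
  "gamma_monomial a t = (\<Prod>i\<in>UNIV. if 0 < t i then t i powr (a i - 1) else 0)"

definition lin_form :: "('n::finite \<Rightarrow> real) \<Rightarrow> ('n \<Rightarrow> real) \<Rightarrow> real" where
  "lin_form b t = (\<Sum>i\<in>UNIV. b i * t i)"

definition gamma_norm :: "('n::finite \<Rightarrow> real) \<Rightarrow> ('n \<Rightarrow> real) \<Rightarrow> real" where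
  "gamma_norm a b = (\<Prod>i\<in>UNIV. b i powr a i / Gamma (a i))"

lemma borel_measurable_gamma_monomial[measurable]: "gamma_monomial a \<in> borel_measurable lborel_Pi"
  unfolding gamma_monomial_def by measurable

lemma borel_measurable_lin_form[measurable]:
  "lin_form b \<in> borel_measurable lborel_Pi"
  "lin_form b \<in> borel_measurable (PiM UNIV (\<lambda>_. borel))"
  unfolding lin_form_def by measurable measurable

lemma gamma_monomial_nonneg: "0 \<le> gamma_monomial a t"
  unfolding gamma_monomial_def by (intro prod_nonneg) auto

lemma gamma_monomial_nonzero_imp_pos: "gamma_monomial a t \<noteq> 0 \<Longrightarrow> 0 < t i"
  unfolding gamma_monomial_def by (cases "0 < t i") (auto simp: prod_zero_iff dest: spec[of _ i])

lemma gamma_monomial_scale: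
  assumes "c > 0"
  shows "gamma_monomial a (\<lambda>i. c * t i) = c powr (sum a UNIV - CARD('n)) * gamma_monomial a (t :: 'n::finite \<Rightarrow> real)"
proof -
  have "gamma_monomial a (\<lambda>i. c * t i) = (\<Prod>i\<in>UNIV. c powr (a i - 1)) * gamma_monomial a t"
    unfolding gamma_monomial_def prod.distrib[symmetric] using assms
    by (intro prod.cong refl) (auto simp: powr_mult zero_less_mult_iff)
  also have "(\<Prod>i\<in>UNIV. c powr (a i - 1)) = c powr (sum a UNIV - CARD('n))"
    using assms by (subst powr_sum[symmetric]) (auto simp: sum_subtractf)
  finally show ?thesis .
qed

lemma lin_form_pos: "(\<And>i. 0 < b i) \<Longrightarrow> (\<And>i. 0 < t i) \<Longrightarrow> 0 < lin_form b t"
  unfolding lin_form_def by (intro sum_pos) auto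

lemma lin_form_scale: "lin_form b (\<lambda>i. c * t i) = c * lin_form b t"
  unfolding lin_form_def by (simp add: sum_distrib_left mult_ac)

lemma gamma_norm_pos:
  assumes "\<And>i. 0 < a i" and "\<And>i. 0 < b i"
  shows "0 < gamma_norm a b"
  unfolding gamma_norm_def using assms
  by (intro prod_pos divide_pos_pos Gamma_real_pos) (simp_all add: less_imp_neq[symmetric])

lemma gamma_density_nonneg: "0 < a \<Longrightarrow> 0 < b \<Longrightarrow> 0 \<le> gamma_density a b t"
  unfolding gamma_density_def by (auto intro!: divide_nonneg_pos Gamma_real_pos)

lemma borel_measurable_gamma_density[measurable]: "gamma_density a b \<in> borel_measurable borel"
  unfolding gamma_density_def by measurable

lemma nn_integral_gamma_density:
  assumes a: "a > 0" and b: "b > 0"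
  shows "(\<integral>\<^sup>+t. ennreal (gamma_density a b t) \<partial>lborel) = 1"
proof -
  have "ennreal (gamma_density a b (s / b)) =
      ennreal (b / Gamma a) * ennreal (s powr (a - 1) / exp s * indicator {0<..} s)" for s
  proof (cases "s > 0")
    case True
    have "b powr a * (s / b) powr (a - 1) = b * s powr (a - 1)"
      using True b by (simp add: powr_divide powr_diff field_simps)
    then have "gamma_density a b (s / b) = b / Gamma a * (s powr (a - 1) / exp s)"
      using True b by (simp add: gamma_density_def exp_minus field_simps)
    then show ?thesis
      using True a b by (simp add: ennreal_mult[symmetric] Gamma_real_pos less_imp_le)
  qed (use b in \<open>auto simp: gamma_density_def zero_less_divide_iff\<close>)
  note density_rescaled = this
  have "(\<integral>\<^sup>+t. ennreal (gamma_density a b t) \<partial>lborel) =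
      ennreal (1 / b) * (\<integral>\<^sup>+s. ennreal (gamma_density a b (s / b)) \<partial>lborel)"
    using nn_integral_real_affine[of "\<lambda>t. ennreal (gamma_density a b t)" "1 / b" 0] b by simp
  also have "\<dots> = ennreal (1 / b) * (ennreal (b / Gamma a) * ennreal (Gamma a))"
    unfolding density_rescaled using nn_integral_Gamma_real[OF a] by (subst nn_integral_cmult) auto
  also have "\<dots> = 1"
    using a b Gamma_real_pos[OF a] by (simp add: ennreal_mult[symmetric] less_imp_le less_imp_neq[symmetric])
  finally show ?thesis .
qed

lemma prob_space_gamma_distr: "0 < a \<Longrightarrow> 0 < b \<Longrightarrow> prob_space (gamma_distr a b)"
  unfolding gamma_distr_def
  by (rule prob_spaceI) (simp add: emeasure_density nn_integral_gamma_density)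

lemma prod_gamma_density:
  assumes "\<And>i. 0 < a i"
  shows "(\<Prod>i\<in>UNIV. gamma_density (a i) (b i) (t i)) = gamma_norm a b * gamma_monomial a t * exp (- lin_form b t)"
proof (cases "\<forall>i. 0 < t i")
  case True
  then show ?thesis
    unfolding gamma_norm_def gamma_monomial_def lin_form_def sum_negf[symmetric] exp_sum[OF finite_class.finite_UNIV]
      prod.distrib[symmetric]
    by (intro prod.cong refl) (simp add: gamma_density_def field_simps)
next
  case False
  then have "gamma_monomial a t = 0" using gamma_monomial_nonzero_imp_pos by blast
  with False show ?thesis by (auto simp: gamma_density_def prod_zero_iff)
qed

abbreviation gamma_prod_density :: "('n::finite \<Rightarrow> real) \<Rightarrow> ('n \<Rightarrow> real) \<Rightarrow> ('n \<Rightarrow> real) \<Rightarrow> real" where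
  "gamma_prod_density a b t \<equiv> gamma_norm a b * gamma_monomial a t * exp (- lin_form b t)"

lemma PiM_gamma_distr:
  fixes a b :: "'n::finite \<Rightarrow> real"
  assumes a: "\<And>i. 0 < a i" and b: "\<And>i. 0 < b i"
  shows "PiM UNIV (\<lambda>i. gamma_distr (a i) (b i)) = density lborel_Pi (\<lambda>t. ennreal (gamma_prod_density a b t))"
proof -
  interpret G: product_prob_space "\<lambda>i. gamma_distr (a i) (b i)"
    by (intro product_prob_spaceI prob_space_gamma_distr a b)
  interpret product_sigma_finite "\<lambda>_::'n. lborel :: real measure" by standard
  have sets_gamma[simp]: "sets (gamma_distr (a i) (b i)) = sets borel" for i
    by (simp add: gamma_distr_def)
  show ?thesis
  proof (rule G.PiM_eqI[symmetric])
    fix A :: "'n \<Rightarrow> real set" assume "\<And>i. i \<in> UNIV \<Longrightarrow> A i \<in> sets (gamma_distr (a i) (b i))"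
    then have A[measurable]: "A i \<in> sets borel" for i by simp
    have "Pi\<^sub>E UNIV A \<in> sets lborel_Pi" by (auto intro!: sets_PiM_I_finite)
    then have "emeasure (density lborel_Pi (\<lambda>t. ennreal (gamma_prod_density a b t))) (Pi\<^sub>E UNIV A)
      = (\<integral>\<^sup>+t. (\<Prod>i\<in>UNIV. ennreal (gamma_density (a i) (b i) (t i)) * indicator (A i) (t i)) \<partial>lborel_Pi)"
      using a b
      by (auto simp: emeasure_density prod_gamma_density[symmetric] prod.distrib prod_ennreal
          gamma_density_nonneg indicator_def PiE_def Pi_def prod_zero_iff intro!: nn_integral_cong)
    also have "\<dots> = (\<Prod>i\<in>UNIV. emeasure (gamma_distr (a i) (b i)) (A i))"
      by (subst product_nn_integral_prod) (auto simp: gamma_distr_def emeasure_density)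
    finally show "emeasure (density lborel_Pi (\<lambda>t. ennreal (gamma_prod_density a b t))) (Pi\<^sub>E UNIV A)
      = (\<Prod>i\<in>UNIV. emeasure (gamma_distr (a i) (b i)) (A i))" .
  qed (simp_all cong: sets_PiM_cong)
qed

lemma nn_integral_gamma_monomial_exp:
  assumes a: "\<And>i. 0 < a i" and b: "\<And>i. 0 < b i"
  shows "(\<integral>\<^sup>+t. ennreal (gamma_monomial a t * exp (- lin_form b t)) \<partial>lborel_Pi) = ennreal (1 / gamma_norm a b)"
proof -
  have K: "0 < gamma_norm a b" using gamma_norm_pos a b by blast
  interpret prob_space "density lborel_Pi (\<lambda>t. ennreal (gamma_prod_density a b t))"
    unfolding PiM_gamma_distr[OF a b, symmetric]
    by (intro prob_space_PiM prob_space_gamma_distr a b)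
  have "1 = (\<integral>\<^sup>+t. ennreal (gamma_prod_density a b t) \<partial>lborel_Pi)"
    using emeasure_space_1 by (simp add: emeasure_density)
  also have "\<dots> = ennreal (gamma_norm a b) * (\<integral>\<^sup>+t. ennreal (gamma_monomial a t * exp (- lin_form b t)) \<partial>lborel_Pi)"
    using K by (subst nn_integral_cmult[symmetric]) (auto simp: ennreal_mult gamma_monomial_nonneg mult.assoc)
  finally have "ennreal (1 / gamma_norm a b) * 1 = ennreal (1 / gamma_norm a b) * ennreal (gamma_norm a b) *
      (\<integral>\<^sup>+t. ennreal (gamma_monomial a t * exp (- lin_form b t)) \<partial>lborel_Pi)"
    by (simp add: mult.assoc)
  with K show ?thesis by (simp add: ennreal_mult[symmetric])
qed

lemma gamma_monomial_shift: "gamma_monomial (a(j := a j + 1)) t = gamma_monomial a t * t j"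
proof -
  have "gamma_monomial (a(j := a j + 1)) t =
      (\<Prod>i\<in>UNIV. (if 0 < t i then t i powr (a i - 1) else 0) * (if i = j then t j else 1))"
    unfolding gamma_monomial_def using powr_mult_base[of "t j" "a j - 1"]
    by (intro prod.cong refl) (auto simp: mult.commute)
  then show ?thesis unfolding gamma_monomial_def by (simp add: prod.distrib)
qed

lemma gamma_norm_shift:
  assumes "0 < a j" and "0 \<le> b j"
  shows "gamma_norm (a(j := a j + 1)) b = gamma_norm a b * (b j / a j)"
proof -
  have "Gamma (a j + 1) = a j * Gamma (a j)"
    using assms by (simp add: Gamma_plus1_pos)
  then have "gamma_norm (a(j := a j + 1)) b = (\<Prod>i\<in>UNIV. (b i powr a i / Gamma (a i)) * (if i = j then b j / a j else 1))"
    unfolding gamma_norm_def using assms by (intro prod.cong refl) (auto simp: powr_add)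
  also have "\<dots> = gamma_norm a b * (\<Prod>i\<in>UNIV. if i = j then b j / a j else 1)"
    unfolding gamma_norm_def by (rule prod.distrib)
  finally show ?thesis by simp
qed

lemma nn_integral_gamma_monomial_lin_exp:
  fixes a bx bz :: "'n::finite \<Rightarrow> real"
  assumes a: "\<And>i. 0 < a i" and bx: "\<And>i. 0 < bx i" and bz: "\<And>i. 0 < bz i"
  shows "(\<integral>\<^sup>+t. ennreal (gamma_monomial a t * lin_form bx t * exp (- lin_form bz t)) \<partial>lborel_Pi)
     = ennreal ((\<Sum>j\<in>UNIV. a j * bx j / bz j) / gamma_norm a bz)"
proof -
  have K: "0 < gamma_norm a bz" using gamma_norm_pos a bz by blast
  have expand: "ennreal (gamma_monomial a t * lin_form bx t * exp (- lin_form bz t)) =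
      (\<Sum>j\<in>UNIV. ennreal (bx j) * ennreal (gamma_monomial (a(j := a j + 1)) t * exp (- lin_form bz t)))" for t
  proof -
    have "gamma_monomial a t * lin_form bx t * exp (- lin_form bz t) =
        (\<Sum>j\<in>UNIV. bx j * (gamma_monomial (a(j := a j + 1)) t * exp (- lin_form bz t)))"
      by (simp add: gamma_monomial_shift lin_form_def sum_distrib_left sum_distrib_right mult_ac)
    moreover have "0 \<le> bx j * (gamma_monomial (a(j := a j + 1)) t * exp (- lin_form bz t))" for j
      using bx[of j] by (simp add: gamma_monomial_nonneg)
    ultimately show ?thesis
      using bx by (simp add: sum_ennreal ennreal_mult[symmetric] gamma_monomial_nonneg less_imp_le)
  qed
  have "(\<integral>\<^sup>+t. ennreal (gamma_monomial a t * lin_form bx t * exp (- lin_form bz t)) \<partial>lborel_Pi)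
     = (\<Sum>j\<in>UNIV. ennreal (bx j) * ennreal (1 / gamma_norm (a(j := a j + 1)) bz))"
    unfolding expand using a bz
    by (subst nn_integral_sum) (auto simp: nn_integral_cmult nn_integral_gamma_monomial_exp add_pos_pos)
  also have "\<dots> = (\<Sum>j\<in>UNIV. ennreal (a j * bx j / bz j / gamma_norm a bz))"
  proof (intro sum.cong refl)
    fix j
    have "gamma_norm (a(j := a j + 1)) bz = gamma_norm a bz * (bz j / a j)"
      using a bz by (intro gamma_norm_shift less_imp_le)
    then have "bx j * (1 / gamma_norm (a(j := a j + 1)) bz) = a j * bx j / bz j / gamma_norm a bz"
      using a[of j] bz[of j] by (simp add: mult_ac)
    then show "ennreal (bx j) * ennreal (1 / gamma_norm (a(j := a j + 1)) bz) = ennreal (a j * bx j / bz j / gamma_norm a bz)"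
      by (metis bx ennreal_mult' less_imp_le)
  qed
  also have "\<dots> = ennreal ((\<Sum>j\<in>UNIV. a j * bx j / bz j) / gamma_norm a bz)"
    using a bx bz K by (subst sum_ennreal) (auto simp: sum_divide_distrib less_imp_le)
  finally show ?thesis .
qed

lemma gamma_monomial_lin_form_powr_scale:
  fixes a bx bz t :: "'n::finite \<Rightarrow> real"
  assumes bx: "\<And>i. 0 < bx i" and bz: "\<And>i. 0 < bz i" and pq: "p + q = - sum a UNIV" and c: "c > 0"
  shows "c ^ CARD('n) * (gamma_monomial a (\<lambda>i. c * t i) * lin_form bx (\<lambda>i. c * t i) powr p * lin_form bz (\<lambda>i. c * t i) powr q)
       = gamma_monomial a t * lin_form bx t powr p * lin_form bz t powr q"
proof (cases "gamma_monomial a t = 0")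
  case True
  then show ?thesis using c by (simp add: gamma_monomial_scale)
next
  case False
  then have "0 < t i" for i using gamma_monomial_nonzero_imp_pos by blast
  then have Lx: "0 < lin_form bx t" and Lz: "0 < lin_form bz t" using lin_form_pos bx bz by blast+
  have "c powr real CARD('n) * c powr (sum a UNIV - real CARD('n)) * c powr p * c powr q =
      c powr (real CARD('n) + (sum a UNIV - real CARD('n)) + p + q)"
    by (simp only: powr_add)
  also have "\<dots> = 1" using c pq by (simp add: add.assoc)
  finally have "c powr real CARD('n) * c powr (sum a UNIV - real CARD('n)) * c powr p * c powr q = 1" .
  then show ?thesis
    using c Lx Lz by (simp add: gamma_monomial_scale lin_form_scale powr_mult powr_realpow mult_ac)
qed

lemma nn_integral_gamma_rate_exchange:
  fixes a bx bz :: "'n::finite \<Rightarrow> real" and \<phi> :: "('n \<Rightarrow> real) \<Rightarrow> ennreal"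
  defines "A \<equiv> sum a UNIV"
  assumes a: "\<And>i. 0 < a i" and bx: "\<And>i. 0 < bx i" and bz: "\<And>i. 0 < bz i" and p: "0 < A + p"
    and [measurable]: "\<phi> \<in> borel_measurable lborel_Pi"
    and \<phi>_scale: "\<And>c t. c > 0 \<Longrightarrow> \<phi> (\<lambda>i. c * t i) = \<phi> t"
  shows "ennreal (Gamma (A + p)) *
      (\<integral>\<^sup>+t. ennreal (gamma_monomial a t * exp (- lin_form bx t) * (lin_form bx t / lin_form bz t) powr (A + p)) * \<phi> t \<partial>lborel_Pi)
    = ennreal (Gamma A) *
      (\<integral>\<^sup>+t. ennreal (gamma_monomial a t * lin_form bx t powr p * exp (- lin_form bz t)) * \<phi> t \<partial>lborel_Pi)"
proof -
  have A: "0 < A" unfolding A_def using a by (simp add: sum_pos)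
  define F where "F t = \<phi> t * ennreal (gamma_monomial a t * lin_form bx t powr p * lin_form bz t powr (- (A + p)))" for t
  have [measurable]: "F \<in> borel_measurable lborel_Pi" unfolding F_def by measurable
  have L_pos: "0 < lin_form bx t \<and> 0 < lin_form bz t" if "gamma_monomial a t \<noteq> 0" for t
    using that gamma_monomial_nonzero_imp_pos lin_form_pos bx bz by blast
  have exchange: "(\<integral>\<^sup>+t. F t * ennreal (lin_form bx t powr A * exp (- lin_form bx t)) \<partial>lborel_Pi) *
        (\<integral>\<^sup>+v. ennreal (exp v powr (A + p) * exp (- exp v)) \<partial>lborel)
      = (\<integral>\<^sup>+t. F t * ennreal (lin_form bz t powr (A + p) * exp (- lin_form bz t)) \<partial>lborel_Pi) *
        (\<integral>\<^sup>+v. ennreal (exp v powr A * exp (- exp v)) \<partial>lborel)"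
  proof (rule nn_integral_homogeneous_exchange)
    fix c :: real and t :: "'n \<Rightarrow> real" assume "c > 0"
    then show "F t = ennreal (c ^ CARD('n)) * F (\<lambda>i. c * t i)"
      using gamma_monomial_lin_form_powr_scale[OF bx bz _ \<open>c > 0\<close>, of p "- (A + p)" a t]
      by (simp add: F_def A_def \<phi>_scale ennreal_mult'[symmetric] gamma_monomial_nonneg mult_ac)
  next
    fix t assume "F t \<noteq> 0"
    then have "gamma_monomial a t \<noteq> 0" by (auto simp: F_def)
    then show "0 < lin_form bx t \<and> 0 < lin_form bz t" by (rule L_pos)
  qed (auto simp: lin_form_scale)
  have lhs_eq: "F t * ennreal (lin_form bx t powr A * exp (- lin_form bx t)) =
      ennreal (gamma_monomial a t * exp (- lin_form bx t) * (lin_form bx t / lin_form bz t) powr (A + p)) * \<phi> t" for t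
  proof (cases "gamma_monomial a t = 0")
    case False
    with L_pos have "0 < lin_form bx t" "0 < lin_form bz t" by auto
    then have "(lin_form bx t / lin_form bz t) powr (A + p) = lin_form bx t powr (A + p) / lin_form bz t powr (A + p)"
      by (simp only: powr_divide less_imp_le)
    also have "\<dots> = lin_form bx t powr p * lin_form bz t powr (- (A + p)) * lin_form bx t powr A"
      by (simp only: powr_minus divide_inverse) (simp add: powr_add mult_ac)
    finally have "lin_form bx t powr p * lin_form bz t powr (- (A + p)) * lin_form bx t powr A =
        (lin_form bx t / lin_form bz t) powr (A + p)" ..
    then show ?thesis
      unfolding F_def by (simp add: ennreal_mult'[symmetric] gamma_monomial_nonneg mult_ac)
  qed (simp add: F_def)
  have rhs_eq: "F t * ennreal (lin_form bz t powr (A + p) * exp (- lin_form bz t)) =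
      ennreal (gamma_monomial a t * lin_form bx t powr p * exp (- lin_form bz t)) * \<phi> t" for t
  proof (cases "gamma_monomial a t = 0")
    case False
    have "lin_form bz t powr (- (A + p)) * lin_form bz t powr (A + p) = 1"
      using L_pos[OF False] by (simp flip: powr_add)
    then show ?thesis
      unfolding F_def by (simp add: ennreal_mult'[symmetric] gamma_monomial_nonneg mult_ac)
  qed (simp add: F_def)
  from exchange show ?thesis
    unfolding lhs_eq rhs_eq nn_integral_Gamma_exp[OF A] nn_integral_Gamma_exp[OF p] by (simp add: mult.commute)
qed

lemma nn_integral_gamma_prod_density_rate_change:
  fixes a bx bz :: "'n::finite \<Rightarrow> real" and \<phi> :: "('n \<Rightarrow> real) \<Rightarrow> ennreal"
  defines "A \<equiv> sum a UNIV"
  assumes a: "\<And>i. 0 < a i" and bx: "\<And>i. 0 < bx i" and bz: "\<And>i. 0 < bz i"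
    and \<phi>_meas[measurable]: "\<phi> \<in> borel_measurable lborel_Pi"
    and \<phi>_scale: "\<And>c t. c > 0 \<Longrightarrow> \<phi> (\<lambda>i. c * t i) = \<phi> t"
  shows "(\<integral>\<^sup>+t. ennreal (gamma_prod_density a bz t) * \<phi> t \<partial>lborel_Pi) =
    (\<integral>\<^sup>+t. ennreal (gamma_prod_density a bx t *
      (gamma_norm a bz / gamma_norm a bx * (lin_form bx t / lin_form bz t) powr A)) * \<phi> t \<partial>lborel_Pi)"
proof -
  have A: "0 < A" unfolding A_def using a by (simp add: sum_pos)
  have Kx: "0 < gamma_norm a bx" and Kz: "0 < gamma_norm a bz"
    using gamma_norm_pos a bx bz by blast+
  have powr_zero: "gamma_monomial a t * lin_form bx t powr 0 = gamma_monomial a t" for t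
  proof (cases "gamma_monomial a t = 0")
    case False
    then have "0 < lin_form bx t" using gamma_monomial_nonzero_imp_pos lin_form_pos bx by blast
    then show ?thesis by simp
  qed simp
  have "ennreal (Gamma (A + 0)) *
      (\<integral>\<^sup>+t. ennreal (gamma_monomial a t * exp (- lin_form bx t) * (lin_form bx t / lin_form bz t) powr (A + 0)) * \<phi> t \<partial>lborel_Pi)
    = ennreal (Gamma A) *
      (\<integral>\<^sup>+t. ennreal (gamma_monomial a t * lin_form bx t powr 0 * exp (- lin_form bz t)) * \<phi> t \<partial>lborel_Pi)"
    unfolding A_def using a bx bz A \<phi>_meas \<phi>_scale
    by (intro nn_integral_gamma_rate_exchange) (simp_all add: A_def)
  then have exchange: "(\<integral>\<^sup>+t. ennreal (gamma_monomial a t * exp (- lin_form bz t)) * \<phi> t \<partial>lborel_Pi) =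
    (\<integral>\<^sup>+t. ennreal (gamma_monomial a t * exp (- lin_form bx t) * (lin_form bx t / lin_form bz t) powr A) * \<phi> t \<partial>lborel_Pi)"
    unfolding powr_zero using Gamma_real_pos[OF A] by (simp add: ennreal_mult_cancel_left)
  have "gamma_prod_density a bx t * (gamma_norm a bz / gamma_norm a bx * (lin_form bx t / lin_form bz t) powr A) =
      gamma_norm a bz * (gamma_monomial a t * exp (- lin_form bx t) * (lin_form bx t / lin_form bz t) powr A)" for t
    using Kx by (simp add: field_simps)
  then show ?thesis
    using Kz exchange
    by (simp add: ennreal_mult' gamma_monomial_nonneg mult.assoc nn_integral_cmult)
qed

lemma measurable_closure_op[measurable]: "closure_op \<in> measurable lborel_Pi (PiM UNIV (\<lambda>_. borel))"
  unfolding closure_op_def by (rule measurable_PiM_single') (auto simp: space_PiM)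

lemma closure_op_scale: "c \<noteq> 0 \<Longrightarrow> closure_op (\<lambda>i. c * t i) = closure_op t"
  unfolding closure_op_def by (simp add: fun_eq_iff sum_distrib_left[symmetric])

lemma lin_form_ratio_closure_op:
  assumes "\<And>i. 0 < t i"
  shows "lin_form b1 (closure_op t) / lin_form b2 (closure_op t) = lin_form b1 t / lin_form b2 t"
proof -
  have "0 < sum t UNIV" using assms by (simp add: sum_pos)
  then show ?thesis
    by (simp add: closure_op_def lin_form_def sum_divide_distrib[symmetric])
qed

lemma sets_scaled_dirichlet[simp, measurable_cong]:
  "sets (scaled_dirichlet a b) = sets (PiM UNIV (\<lambda>_. borel))"
  by (simp add: scaled_dirichlet_def)

lemma scaled_dirichlet_eq_distr_density:
  assumes "\<And>i. 0 < a i" and "\<And>i. 0 < b i"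
  shows "scaled_dirichlet a b =
    distr (density lborel_Pi (\<lambda>t. ennreal (gamma_prod_density a b t))) (PiM UNIV (\<lambda>_. borel)) closure_op"
  unfolding scaled_dirichlet_def PiM_gamma_distr[OF assms] ..

lemma prob_space_scaled_dirichlet:
  assumes "\<And>i. 0 < a i" and "\<And>i. 0 < b i"
  shows "prob_space (scaled_dirichlet a b)"
proof -
  have "prob_space (density lborel_Pi (\<lambda>t. ennreal (gamma_prod_density a b t)))"
    unfolding PiM_gamma_distr[OF assms, symmetric] by (intro prob_space_PiM prob_space_gamma_distr assms)
  then show ?thesis
    unfolding scaled_dirichlet_eq_distr_density[OF assms] by (rule prob_space.prob_space_distr) simp
qed

lemma nn_integral_scaled_dirichlet:
  assumes "\<And>i. 0 < a i" and "\<And>i. 0 < b i" and [measurable]: "f \<in> borel_measurable (PiM UNIV (\<lambda>_. borel))"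
  shows "(\<integral>\<^sup>+z. f z \<partial>scaled_dirichlet a b) =
    (\<integral>\<^sup>+t. ennreal (gamma_prod_density a b t) * f (closure_op t) \<partial>lborel_Pi)"
  unfolding scaled_dirichlet_eq_distr_density[OF assms(1,2)]
  by (simp add: nn_integral_distr nn_integral_density)

lemma scaled_dirichlet_rate_change:
  fixes a bx bz :: "'n::finite \<Rightarrow> real"
  defines "A \<equiv> sum a UNIV"
  assumes a: "\<And>i. 0 < a i" and bx: "\<And>i. 0 < bx i" and bz: "\<And>i. 0 < bz i"
  shows "scaled_dirichlet a bz = density (scaled_dirichlet a bx)
    (\<lambda>z. ennreal (gamma_norm a bz / gamma_norm a bx * (lin_form bx z / lin_form bz z) powr A))"
    (is "_ = density _ (\<lambda>z. ennreal (?R z))")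
proof (rule measure_eqI)
  fix B assume "B \<in> sets (scaled_dirichlet a bz)"
  then have B[measurable]: "B \<in> sets (PiM UNIV (\<lambda>_::'n. borel))" by simp
  have R_closure: "?R (closure_op t) = gamma_norm a bz / gamma_norm a bx * (lin_form bx t / lin_form bz t) powr A"
    if "gamma_monomial a t \<noteq> 0" for t
  proof -
    have "0 < t i" for i using that gamma_monomial_nonzero_imp_pos by blast
    then show ?thesis by (simp add: lin_form_ratio_closure_op)
  qed
  have "emeasure (scaled_dirichlet a bz) B = (\<integral>\<^sup>+z. indicator B z \<partial>scaled_dirichlet a bz)"
    by simp
  also have "\<dots> = (\<integral>\<^sup>+t. ennreal (gamma_prod_density a bz t) * indicator B (closure_op t) \<partial>lborel_Pi)"
    by (rule nn_integral_scaled_dirichlet[OF a bz]) measurable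
  also have "\<dots> = (\<integral>\<^sup>+t. ennreal (gamma_prod_density a bx t *
      (gamma_norm a bz / gamma_norm a bx * (lin_form bx t / lin_form bz t) powr A)) * indicator B (closure_op t) \<partial>lborel_Pi)"
    unfolding A_def using a bx bz
    by (intro nn_integral_gamma_prod_density_rate_change) (auto simp: closure_op_scale)
  also have "\<dots> = (\<integral>\<^sup>+t. ennreal (gamma_prod_density a bx t) * (ennreal (?R (closure_op t)) * indicator B (closure_op t)) \<partial>lborel_Pi)"
  proof (intro nn_integral_cong)
    fix t :: "'n \<Rightarrow> real"
    show "ennreal (gamma_prod_density a bx t * (gamma_norm a bz / gamma_norm a bx * (lin_form bx t / lin_form bz t) powr A)) *
        indicator B (closure_op t) = ennreal (gamma_prod_density a bx t) * (ennreal (?R (closure_op t)) * indicator B (closure_op t))"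
    proof (cases "gamma_monomial a t = 0")
      case False
      have "0 \<le> gamma_prod_density a bx t"
        and "0 \<le> gamma_norm a bz / gamma_norm a bx * (lin_form bx t / lin_form bz t) powr A"
        using gamma_norm_pos[of a bx] gamma_norm_pos[of a bz] a bx bz by (simp_all add: gamma_monomial_nonneg)
      then show ?thesis
        unfolding R_closure[OF False] by (metis ennreal_mult mult.assoc)
    qed simp
  qed
  also have "\<dots> = (\<integral>\<^sup>+z. ennreal (?R z) * indicator B z \<partial>scaled_dirichlet a bx)"
    by (rule nn_integral_scaled_dirichlet[OF a bx, symmetric]) measurable
  also have "\<dots> = emeasure (density (scaled_dirichlet a bx) (\<lambda>z. ennreal (?R z))) B"
    by (simp add: emeasure_density)
  finally show "emeasure (scaled_dirichlet a bz) B = emeasure (density (scaled_dirichlet a bx) (\<lambda>z. ennreal (?R z))) B" .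
qed simp

lemma nn_integral_scaled_dirichlet_lin_form_ratio_powr:
  fixes a bx bz :: "'n::finite \<Rightarrow> real"
  defines "A \<equiv> sum a UNIV"
  assumes a: "\<And>i. 0 < a i" and bx: "\<And>i. 0 < bx i" and bz: "\<And>i. 0 < bz i"
  shows "(\<integral>\<^sup>+z. ennreal ((lin_form bx z / lin_form bz z) powr (A + 1)) \<partial>scaled_dirichlet a bx)
    = ennreal (gamma_norm a bx / gamma_norm a bz * (\<Sum>j\<in>UNIV. a j * bx j / bz j) / A)"
proof -
  have A: "0 < A" unfolding A_def using a by (simp add: sum_pos)
  have Kx: "0 < gamma_norm a bx" and Kz: "0 < gamma_norm a bz"
    using gamma_norm_pos a bx bz by blast+
  define I where "I = (\<integral>\<^sup>+t. ennreal (gamma_monomial a t * exp (- lin_form bx t) *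
    (lin_form bx t / lin_form bz t) powr (A + 1)) * 1 \<partial>lborel_Pi)"
  have L_pos: "0 < lin_form bx t" "0 < lin_form bz t" and t_pos: "0 < t i"
    if "gamma_monomial a t \<noteq> 0" for t i
    using that gamma_monomial_nonzero_imp_pos lin_form_pos bx bz by blast+
  have "(\<integral>\<^sup>+z. ennreal ((lin_form bx z / lin_form bz z) powr (A + 1)) \<partial>scaled_dirichlet a bx)
      = (\<integral>\<^sup>+t. ennreal (gamma_norm a bx) * (ennreal (gamma_monomial a t * exp (- lin_form bx t) *
          (lin_form bx t / lin_form bz t) powr (A + 1)) * 1) \<partial>lborel_Pi)"
  proof -
    have "ennreal (gamma_prod_density a bx t) * ennreal ((lin_form bx (closure_op t) / lin_form bz (closure_op t)) powr (A + 1))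
      = ennreal (gamma_norm a bx) * (ennreal (gamma_monomial a t * exp (- lin_form bx t) *
          (lin_form bx t / lin_form bz t) powr (A + 1)) * 1)" for t
      using Kx t_pos[of t]
      by (cases "gamma_monomial a t = 0")
         (simp_all add: lin_form_ratio_closure_op ennreal_mult'[symmetric] gamma_monomial_nonneg mult.assoc)
    then show ?thesis
      using a bx by (simp add: nn_integral_scaled_dirichlet)
  qed
  also have "\<dots> = ennreal (gamma_norm a bx) * I"
    unfolding I_def by (rule nn_integral_cmult) measurable
  also have "I = ennreal ((\<Sum>j\<in>UNIV. a j * bx j / bz j) / gamma_norm a bz / A)"
  proof -
    have powr_one: "gamma_monomial a t * lin_form bx t powr 1 = gamma_monomial a t * lin_form bx t" for t
      using L_pos[of t] by (cases "gamma_monomial a t = 0") simp_all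
    have lin: "(\<integral>\<^sup>+t. ennreal (gamma_monomial a t * lin_form bx t * exp (- lin_form bz t)) \<partial>lborel_Pi)
        = ennreal ((\<Sum>j\<in>UNIV. a j * bx j / bz j) / gamma_norm a bz)"
      using a bx bz by (rule nn_integral_gamma_monomial_lin_exp)
    have "ennreal (Gamma (A + 1)) * I = ennreal (Gamma A) *
        (\<integral>\<^sup>+t. ennreal (gamma_monomial a t * lin_form bx t powr 1 * exp (- lin_form bz t)) * 1 \<partial>lborel_Pi)"
      unfolding I_def A_def using a bx bz A
      by (intro nn_integral_gamma_rate_exchange) (simp_all add: A_def)
    then have "ennreal (Gamma A) * ennreal A * I = ennreal (Gamma A) * ennreal ((\<Sum>j\<in>UNIV. a j * bx j / bz j) / gamma_norm a bz)"
      unfolding powr_one mult_1_right lin Gamma_plus1_pos[OF A] using A Gamma_real_pos[OF A]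
      by (simp add: ennreal_mult mult_ac)
    then have "ennreal (Gamma A) * (ennreal A * I) = ennreal (Gamma A) * ennreal ((\<Sum>j\<in>UNIV. a j * bx j / bz j) / gamma_norm a bz)"
      by (simp add: mult.assoc)
    also have "ennreal ((\<Sum>j\<in>UNIV. a j * bx j / bz j) / gamma_norm a bz) =
        ennreal A * ennreal ((\<Sum>j\<in>UNIV. a j * bx j / bz j) / gamma_norm a bz / A)"
      using A by (simp add: ennreal_mult'[symmetric])
    finally show ?thesis
      using A Gamma_real_pos[OF A] by (simp add: ennreal_mult_cancel_left)
  qed
  also have "ennreal (gamma_norm a bx) * \<dots> = ennreal (gamma_norm a bx / gamma_norm a bz * (\<Sum>j\<in>UNIV. a j * bx j / bz j) / A)"
    using Kx Kz A a bx bz by (simp add: ennreal_mult'[symmetric] sum_nonneg less_imp_le)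
  finally show ?thesis .
qed

lemma renyi_div_density:
  fixes f :: "'a \<Rightarrow> real"
  assumes M: "sigma_finite_measure M" and f[measurable]: "f \<in> borel_measurable M" and f_nonneg: "\<And>x. 0 \<le> f x"
    and V: "(\<integral>\<^sup>+x. ennreal (f x powr \<alpha>) \<partial>M) = ennreal V" "0 \<le> V"
  shows "renyi_div \<alpha> (density M (\<lambda>x. ennreal (f x))) M = ereal (ln V / (\<alpha> - 1))"
proof -
  interpret sigma_finite_measure M by (rule M)
  have "AE x in M. ennreal (f x) = RN_deriv M (density M (\<lambda>x. ennreal (f x))) x"
    by (rule RN_deriv_unique) simp_all
  then have "AE x in M. ennreal (enn2real (RN_deriv M (density M (\<lambda>x. ennreal (f x))) x) powr \<alpha>) = ennreal (f x powr \<alpha>)"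
    by eventually_elim (metis enn2real_ennreal f_nonneg)
  then have "(\<integral>\<^sup>+x. ennreal (enn2real (RN_deriv M (density M (\<lambda>x. ennreal (f x))) x) powr \<alpha>) \<partial>M) = ennreal V"
    unfolding V(1)[symmetric] by (rule nn_integral_cong_AE)
  moreover have "absolutely_continuous M (density M (\<lambda>x. ennreal (f x)))"
    by (rule absolutely_continuousI_density) simp
  ultimately show ?thesis
    using V(2) by (simp add: renyi_div_def)
qed

lemma ln_gamma_norm:
  assumes "\<And>i. 0 < a i" and "\<And>i. 0 < b i"
  shows "ln (gamma_norm a b) = (\<Sum>i\<in>UNIV. a i * ln (b i) - ln (Gamma (a i)))"
  unfolding gamma_norm_def using assms Gamma_real_pos[of "a _"]
  by (subst ln_prod) (auto simp: ln_div ln_powr less_imp_neq[symmetric])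

lemma renyi_div_scaled_dirichlet:
  fixes a bx bz :: "'n::finite \<Rightarrow> real"
  defines "A \<equiv> sum a UNIV"
  assumes a: "\<And>i. 0 < a i" and bx: "\<And>i. 0 < bx i" and bz: "\<And>i. 0 < bz i"
  shows "renyi_div (1 + 1 / A) (scaled_dirichlet a bz) (scaled_dirichlet a bx) =
    ereal ((\<Sum>i\<in>UNIV. a i * ln (bz i / bx i)) + A * ln ((\<Sum>j\<in>UNIV. a j * bx j / bz j) / A))"
proof -
  have A: "0 < A" unfolding A_def using a by (simp add: sum_pos)
  have Kx: "0 < gamma_norm a bx" and Kz: "0 < gamma_norm a bz"
    using gamma_norm_pos a bx bz by blast+
  define S where "S = (\<Sum>j\<in>UNIV. a j * bx j / bz j)"
  have S: "0 < S" unfolding S_def using a bx bz by (simp add: sum_pos)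
  define K where "K = gamma_norm a bz / gamma_norm a bx"
  have K: "0 < K" unfolding K_def using Kx Kz by simp
  define V where "V = K powr (1 / A) * (S / A)"
  have integral: "(\<integral>\<^sup>+z. ennreal ((K * (lin_form bx z / lin_form bz z) powr A) powr (1 + 1 / A)) \<partial>scaled_dirichlet a bx)
      = ennreal V"
  proof -
    have "(\<integral>\<^sup>+z. ennreal ((K * (lin_form bx z / lin_form bz z) powr A) powr (1 + 1 / A)) \<partial>scaled_dirichlet a bx)
        = (\<integral>\<^sup>+z. ennreal (K powr (1 + 1 / A)) * ennreal ((lin_form bx z / lin_form bz z) powr (A + 1)) \<partial>scaled_dirichlet a bx)"
      using K A by (intro nn_integral_cong) (simp add: powr_mult powr_powr ennreal_mult distrib_left)
    also have "\<dots> = ennreal (K powr (1 + 1 / A)) * ennreal (S / K / A)"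
      unfolding A_def S_def K_def using a bx bz
      by (subst nn_integral_cmult) (simp_all add: nn_integral_scaled_dirichlet_lin_form_ratio_powr mult_ac)
    also have "K powr (1 + 1 / A) = K * K powr (1 / A)"
      using K by (simp add: powr_add)
    finally show ?thesis
      unfolding V_def using K A S by (simp add: ennreal_mult'[symmetric] field_simps)
  qed
  have rate_change: "scaled_dirichlet a bz = density (scaled_dirichlet a bx) (\<lambda>z. ennreal (K * (lin_form bx z / lin_form bz z) powr A))"
    unfolding K_def A_def using a bx bz by (rule scaled_dirichlet_rate_change)
  have "renyi_div (1 + 1 / A) (scaled_dirichlet a bz) (scaled_dirichlet a bx) = ereal (ln V / (1 + 1 / A - 1))"
    unfolding rate_change
  proof (rule renyi_div_density)
    show "sigma_finite_measure (scaled_dirichlet a bx)"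
      using a bx by (intro prob_space_imp_sigma_finite prob_space_scaled_dirichlet)
  qed (use integral K S A in \<open>simp_all add: V_def\<close>)
  also have "ln V / (1 + 1 / A - 1) = ln K + A * ln (S / A)"
  proof -
    have "ln V = ln K / A + ln (S / A)" unfolding V_def using K A S by (subst ln_mult) (simp_all add: ln_powr)
    with A show ?thesis by (simp add: field_simps)
  qed
  also have "ln K = (\<Sum>i\<in>UNIV. a i * ln (bz i / bx i))"
    unfolding K_def using Kx Kz a bx bz
    by (simp add: ln_div ln_gamma_norm sum_subtractf[symmetric] algebra_simps less_imp_neq[symmetric])
  finally show ?thesis unfolding S_def .
qed

lemma Gamma_div_eq_scaled_dirichlet_rates:
  fixes \<pi> x y :: "'n::finite \<Rightarrow> real"
  assumes \<pi>: "\<And>i. 0 < \<pi> i" and x: "\<And>i. 0 < x i" and y: "\<And>i. 0 < y i" and "\<sigma> > 0"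
    and A: "(\<Sum>i\<in>UNIV. \<pi> i / \<sigma>) = 1 / \<sigma>"
  shows "(\<Sum>i\<in>UNIV. \<pi> i / \<sigma> * ln ((\<pi> i / y i) / (\<pi> i / x i))) +
      (\<Sum>i\<in>UNIV. \<pi> i / \<sigma>) * ln ((\<Sum>j\<in>UNIV. \<pi> j / \<sigma> * (\<pi> j / x j) / (\<pi> j / y j)) / (\<Sum>i\<in>UNIV. \<pi> i / \<sigma>))
    = Gamma_div \<pi> y x / \<sigma>"
proof -
  have ln_ratio: "\<pi> i / \<sigma> * ln ((\<pi> i / y i) / (\<pi> i / x i)) = - (\<pi> i * ln (y i / x i)) / \<sigma>" for i
    using \<pi>[of i] x[of i] y[of i] \<open>\<sigma> > 0\<close> by (simp add: ln_div field_simps)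
  have "\<pi> j / \<sigma> * (\<pi> j / x j) / (\<pi> j / y j) = \<pi> j * (y j / x j) / \<sigma>" for j
    using \<pi>[of j] x[of j] y[of j] by (simp add: field_simps)
  then have ratio: "(\<Sum>j\<in>UNIV. \<pi> j / \<sigma> * (\<pi> j / x j) / (\<pi> j / y j)) / (\<Sum>i\<in>UNIV. \<pi> i / \<sigma>) = (\<Sum>j\<in>UNIV. \<pi> j * (y j / x j))"
    unfolding A using \<open>\<sigma> > 0\<close> by (simp only: sum_divide_distrib[symmetric]) simp
  show ?thesis
    unfolding ln_ratio ratio unfolding A Gamma_div_def
    by (simp add: sum_negf sum_divide_distrib[symmetric] diff_divide_distrib)
qed

theorem mainTheorem5:
  fixes \<pi> x y :: "'n::finite \<Rightarrow> real" and \<sigma> :: real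
  assumes "CARD('n) \<ge> 2"
    and "\<pi> \<in> open_simplex" and "\<sigma> > 0"
    and "x \<in> open_simplex" and "y \<in> open_simplex"
  shows "renyi_div (1 + \<sigma>) (mu_sd \<pi> y \<sigma>) (mu_sd \<pi> x \<sigma>) = ereal (Gamma_div \<pi> y x / \<sigma>)"
proof -
  have pos: "0 < \<pi> i" "0 < x i" "0 < y i" for i
    using assms(2,4,5) by (auto simp: open_simplex_def)
  have A: "(\<Sum>i\<in>UNIV. \<pi> i / \<sigma>) = 1 / \<sigma>"
    using assms(2) by (simp add: open_simplex_def sum_divide_distrib[symmetric])
  have "renyi_div (1 + \<sigma>) (mu_sd \<pi> y \<sigma>) (mu_sd \<pi> x \<sigma>) =
      renyi_div (1 + 1 / (\<Sum>i\<in>UNIV. \<pi> i / \<sigma>))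
        (scaled_dirichlet (\<lambda>i. \<pi> i / \<sigma>) (\<lambda>i. \<pi> i / y i)) (scaled_dirichlet (\<lambda>i. \<pi> i / \<sigma>) (\<lambda>i. \<pi> i / x i))"
    unfolding mu_sd_def A by simp
  also have "\<dots> = ereal (Gamma_div \<pi> y x / \<sigma>)"
    unfolding Gamma_div_eq_scaled_dirichlet_rates[of \<pi> x y \<sigma>, OF pos \<open>\<sigma> > 0\<close> A, symmetric]
    by (rule renyi_div_scaled_dirichlet) (use pos \<open>\<sigma> > 0\<close> in auto)
  finally show ?thesis .
qed

end
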